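(* Consider a radial three-phase grid with $n$ buses $b_1,\dots,b_n$ and $m$ lines, in which a subset of buses (indexed by $\mathcal{M}_b$) is monitored, a monitored bus $b_i$ providing its three phase-to-ground voltage phasors $\dot{\mathbf{V}}^{abc}_i$ and its three injected current phasors $\dot{\mathbf{I}}^{abc}_i$, and the buses indexed by $\mathcal{N}_b=\{1,\dots,n\}\setminus\mathcal{M}_b$ being non-monitored. Suppose that for every $i=1,2,\ldots,n$: (a) if $\rho(b_i)>1$, then $b_i$ has at most one adjacent non-monitored bus; (b) if $\rho(b_i)=1$ and $b_i$ is non-monitored, then $b_i$ is adjacent to a monitored bus. Then the grid is observable.
   Context: A radial grid is a grid whose underlying graph (buses as vertices, lines as edges) is a tree; $\rho(b_i)$ denotes the degree of bus $b_i$, i.e. the number of buses connected to $b_i$ by a line. Each bus $b_i$ has three-phase voltage $\dot{\mathbf{V}}^{abc}_i\in\mathbb{C}^3$. Each line between $b_i$ and $b_j$ is modeled by a known invertible $3\times 3$ complex series admittance matrix $Y_{ij}$ (and possibly known shunt admittance matrices), so that the injected current at bus $b_i$ is $\dot{\mathbf{I}}^{abc}_i=\sum_{j \text{ adjacent to } i} Y_{ij}(\dot{\mathbf{V}}^{abc}_i-\dot{\mathbf{V}}^{abc}_j)+Y^{sh}_i\dot{\mathbf{V}}^{abc}_i$; equivalently $\dot{\mathbf I}=Y\dot{\mathbf V}$ with $Y$ the known network admittance matrix. The state is $x\in\mathbb{R}^{6n}$, the stacked real and imaginary parts of all bus voltages; the (noise-free) measurement vector $z=Hx\in\mathbb{R}^{12d}$,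 $d=|\mathcal{M}_b|$, stacks the real and imaginary parts of $\dot{\mathbf{V}}^{abc}_i$ and $\dot{\mathbf{I}}^{abc}_i$ for $i\in\mathcal{M}_b$. The grid is called observable if, in this noise-free setting, the voltages at all buses are uniquely determined by the measurements, i.e. $Hx=Hx'$ implies $x=x'$. *)

theory Defs
  imports "HOL-Analysis.Analysis"
begin

text \<open>Buses are indexed by 0..<n (bus b_{i+1} of the paper is index i).
  The network graph is given by an adjacency relation adj on buses.\<close>

definition lines :: "nat \<Rightarrow> (nat \<Rightarrow> nat \<Rightarrow> bool) \<Rightarrow> (nat \<times> nat) set" where
  "lines n adj = {(i, j). i < j \<and> j < n \<and> adj i j}"

definition radial :: "nat \<Rightarrow> (nat \<Rightarrow> nat \<Rightarrow> bool) \<Rightarrow> bool" where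
  "radial n adj \<longleftrightarrow>
     (\<forall>i j. adj i j \<longrightarrow> i < n \<and> j < n) \<and>
     (\<forall>i j. adj i j \<longrightarrow> adj j i) \<and>
     (\<forall>i. \<not> adj i i) \<and>
     (\<forall>i j. i < n \<longrightarrow> j < n \<longrightarrow> adj\<^sup>*\<^sup>* i j) \<and>
     card (lines n adj) = n - 1"

definition degree :: "nat \<Rightarrow> (nat \<Rightarrow> nat \<Rightarrow> bool) \<Rightarrow> nat \<Rightarrow> nat" where
  "degree n adj i = card {j. j < n \<and> adj i j}"

definition injected_current ::
  "nat \<Rightarrow> (nat \<Rightarrow> nat \<Rightarrow> bool) \<Rightarrow> (nat \<Rightarrow> nat \<Rightarrow> complex^3^3) \<Rightarrow> (nat \<Rightarrow> complex^3^3)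
   \<Rightarrow> (nat \<Rightarrow> complex^3) \<Rightarrow> nat \<Rightarrow> complex^3" where
  "injected_current n adj Y Ysh V i =
     (\<Sum>j\<in>{j. j < n \<and> adj i j}. Y i j *v (V i - V j)) + Ysh i *v V i"

text \<open>Noise-free measurements: for every monitored bus, its voltage and
  injected current phasors (complex form of the stacked real/imag parts).\<close>
definition measurements ::
  "nat \<Rightarrow> (nat \<Rightarrow> nat \<Rightarrow> bool) \<Rightarrow> (nat \<Rightarrow> nat \<Rightarrow> complex^3^3) \<Rightarrow> (nat \<Rightarrow> complex^3^3)
   \<Rightarrow> nat set \<Rightarrow> (nat \<Rightarrow> complex^3) \<Rightarrow> nat \<Rightarrow> ((complex^3) \<times> (complex^3)) option" where
  "measurements n adj Y Ysh M V i =
     (if i \<in> M then Some (V i, injected_current n adj Y Ysh V i) else None)"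

definition observable ::
  "nat \<Rightarrow> (nat \<Rightarrow> nat \<Rightarrow> bool) \<Rightarrow> (nat \<Rightarrow> nat \<Rightarrow> complex^3^3) \<Rightarrow> (nat \<Rightarrow> complex^3^3)
   \<Rightarrow> nat set \<Rightarrow> bool" where
  "observable n adj Y Ysh M \<longleftrightarrow>
     (\<forall>V V'. measurements n adj Y Ysh M V = measurements n adj Y Ysh M V' \<longrightarrow>
        (\<forall>i<n. V i = V' i))"

end

theory Submission
  imports Defs
begin

text \<open>Let V and V' be voltage profiles with the same measurements and D = V - V'. At a monitored
  bus i, D i = 0 and the injected currents agree, so Kirchhoff's law at i reads
  sum_k Y i k *v (- D k) = 0 over the neighbours k of i. By (a) at most one neighbour j of i
  is non-monitored, all other terms vanish, and invertibility of Y i j forces D j = 0. Thus D vanishes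
  on monitored buses and on their neighbours; by (a) and (b) every bus is one of these, since
  connectedness with n \<ge> 2 gives every bus a neighbour.\<close>

lemma invertible_mult_vec_eq_0:
  fixes A :: "'a::field^'n^'n"
  assumes "invertible A" and "A *v x = 0"
  shows "x = 0"
  using assms by (metis invertible_left_inverse matrix_left_invertible_ker)

lemma injected_current_diff:
  "injected_current n adj Y Ysh V i - injected_current n adj Y Ysh V' i =
   (\<Sum>k\<in>{k. k < n \<and> adj i k}. Y i k *v ((V i - V' i) - (V k - V' k))) + Ysh i *v (V i - V' i)"
  unfolding injected_current_def
  by (simp add: sum_subtractf[symmetric] algebra_simps)

lemma injected_current_eq_imp_neighbour_eq:
  assumes "adj i j" and "j < n" and "invertible (Y i j)"
    and "V i = V' i"
    and "injected_current n adj Y Ysh V i = injected_current n adj Y Ysh V' i"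
    and other_neighbours: "\<And>k. k < n \<Longrightarrow> adj i k \<Longrightarrow> k \<noteq> j \<Longrightarrow> V k = V' k"
  shows "V j = V' j"
proof -
  define S where "S = {k. k < n \<and> adj i k}"
  have "finite S" and "j \<in> S"
    using assms(1,2) by (auto simp: S_def)
  have "0 = injected_current n adj Y Ysh V i - injected_current n adj Y Ysh V' i"
    using assms(5) by simp
  also have "\<dots> = (\<Sum>k\<in>S. Y i k *v (- (V k - V' k)))"
    unfolding injected_current_diff S_def using assms(4) by simp
  also have "\<dots> = Y i j *v (- (V j - V' j)) + (\<Sum>k\<in>S - {j}. Y i k *v (- (V k - V' k)))"
    using \<open>finite S\<close> \<open>j \<in> S\<close> by (simp add: sum.remove)
  also have "(\<Sum>k\<in>S - {j}. Y i k *v (- (V k - V' k))) = 0"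
    using other_neighbours by (intro sum.neutral) (auto simp: S_def)
  finally have "Y i j *v (- (V j - V' j)) = 0"
    by simp
  then show ?thesis
    using invertible_mult_vec_eq_0 assms(3) by fastforce
qed

lemma radial_has_neighbour:
  assumes "radial n adj" and "n \<ge> 2" and "i < n"
  obtains j where "j < n" and "adj i j"
proof -
  define k where "k = (if i = 0 then 1 else 0 :: nat)"
  have "k < n" and "k \<noteq> i"
    using assms(2) by (auto simp: k_def)
  then have "adj\<^sup>*\<^sup>* i k" and "i \<noteq> k"
    using assms(1,3) by (auto simp: radial_def)
  then obtain j where "adj i j"
    by (metis converse_rtranclpE)
  moreover have "j < n"
    using assms(1) \<open>adj i j\<close> by (simp add: radial_def)
  ultimately show ?thesis
    using that by blast
qed

lemma unmonitored_neighbour_unique: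
  assumes few: "degree n adj i > 1 \<Longrightarrow> card {j. j < n \<and> adj i j \<and> j \<notin> M} \<le> 1"
    and j: "j < n" "adj i j" "j \<notin> M"
    and k: "k < n" "adj i k" "k \<notin> M"
  shows "j = k"
proof (rule ccontr)
  assume "j \<noteq> k"
  have "card {j, k} \<le> degree n adj i"
    unfolding degree_def using j k by (intro card_mono) auto
  then have "card {j. j < n \<and> adj i j \<and> j \<notin> M} \<le> Suc 0"
    using few \<open>j \<noteq> k\<close> by simp
  then show False
    using \<open>j \<noteq> k\<close> j k by (subst (asm) card_le_Suc0_iff_eq) auto
qed

lemma exists_monitored_neighbour:
  assumes few: "degree n adj i > 1 \<Longrightarrow> card {j. j < n \<and> adj i j \<and> j \<notin> M} \<le> 1"
    and leaf: "degree n adj i = 1 \<Longrightarrow> \<exists>j. j < n \<and> adj i j \<and> j \<in> M"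
    and "x < n" and "adj i x"
  shows "\<exists>j. j < n \<and> adj i j \<and> j \<in> M"
proof (cases "degree n adj i = 1")
  case True
  then show ?thesis
    using leaf by blast
next
  case False
  have "degree n adj i \<noteq> 0"
    unfolding degree_def using assms(3,4) by auto
  with False have "card {j. j < n \<and> adj i j \<and> j \<notin> M} < card {j. j < n \<and> adj i j}"
    using few unfolding degree_def by linarith
  show ?thesis
  proof (rule ccontr)
    assume "\<not> ?thesis"
    then have "{j. j < n \<and> adj i j \<and> j \<notin> M} = {j. j < n \<and> adj i j}"
      by blast
    with \<open>card {j. j < n \<and> adj i j \<and> j \<notin> M} < card {j. j < n \<and> adj i j}\<close>
    show False
      by simp
  qed
qed

lemma same_measurements_monitored:
  assumes "measurements n adj Y Ysh M V = measurements n adj Y Ysh M V'" and "i \<in> M"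
  shows "V i = V' i"
    and "injected_current n adj Y Ysh V i = injected_current n adj Y Ysh V' i"
  using fun_cong[OF assms(1), of i] assms(2) by (auto simp: measurements_def)

lemma same_measurements_neighbour_of_monitored:
  assumes same: "measurements n adj Y Ysh M V = measurements n adj Y Ysh M V'"
    and "i \<in> M" and "adj i j" and "j < n" and "invertible (Y i j)"
    and few: "degree n adj i > 1 \<Longrightarrow> card {j. j < n \<and> adj i j \<and> j \<notin> M} \<le> 1"
  shows "V j = V' j"
proof (cases "j \<in> M")
  case True
  then show ?thesis
    using same_measurements_monitored(1)[OF same] by blast
next
  case False
  have "k \<in> M" if "k < n" "adj i k" "k \<noteq> j" for k
    using unmonitored_neighbour_unique[of n adj i M j, OF few \<open>j < n\<close> \<open>adj i j\<close> False] that
    by blast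
  then have "V k = V' k" if "k < n" "adj i k" "k \<noteq> j" for k
    using same_measurements_monitored(1)[OF same] that by blast
  then show ?thesis
    using injected_current_eq_imp_neighbour_eq[of adj i j n Y V V' Ysh, OF \<open>adj i j\<close> \<open>j < n\<close>
        \<open>invertible (Y i j)\<close> same_measurements_monitored[OF same \<open>i \<in> M\<close>]]
    by blast
qed

theorem lemma1:
  fixes n :: nat and adj :: "nat \<Rightarrow> nat \<Rightarrow> bool"
    and Y :: "nat \<Rightarrow> nat \<Rightarrow> complex^3^3" and Ysh :: "nat \<Rightarrow> complex^3^3"
    and M :: "nat set"
  assumes "radial n adj"
    and "n \<ge> 2"
    and "\<And>i j. adj i j \<Longrightarrow> invertible (Y i j)"
    and "\<And>i j. adj i j \<Longrightarrow> Y i j = Y j i"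
    and "M \<subseteq> {0..<n}"
    and "\<And>i. i < n \<Longrightarrow> degree n adj i > 1 \<Longrightarrow>
           card {j. j < n \<and> adj i j \<and> j \<notin> M} \<le> 1"
    and "\<And>i. i < n \<Longrightarrow> degree n adj i = 1 \<Longrightarrow> i \<notin> M \<Longrightarrow>
           \<exists>j. j < n \<and> adj i j \<and> j \<in> M"
  shows "observable n adj Y Ysh M"
  unfolding observable_def
proof (intro allI impI)
  fix V V' :: "nat \<Rightarrow> complex^3" and i
  assume same: "measurements n adj Y Ysh M V = measurements n adj Y Ysh M V'" and "i < n"
  show "V i = V' i"
  proof (cases "i \<in> M")
    case True
    then show ?thesis
      using same_measurements_monitored(1)[OF same] by blast
  next
    case False
    obtain x where "x < n" "adj i x"
      using radial_has_neighbour[OF assms(1,2) \<open>i < n\<close>] .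
    then obtain j where "j < n" "adj i j" "j \<in> M"
      using exists_monitored_neighbour[of n adj i M, OF assms(6)[OF \<open>i < n\<close>]
          assms(7)[OF \<open>i < n\<close> _ False]]
      by blast
    moreover have "adj j i"
      using assms(1) \<open>adj i j\<close> by (simp add: radial_def)
    ultimately show ?thesis
      using same_measurements_neighbour_of_monitored[of n adj Y Ysh M V V' j i,
          OF same \<open>j \<in> M\<close> \<open>adj j i\<close> \<open>i < n\<close> assms(3)[OF \<open>adj j i\<close>]]
        assms(6)[OF \<open>j < n\<close>]
      by blast
  qed
qed

end
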